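(* Let $A$ be a finite alphabet and $\mu$ the uniform (Lebesgue) product measure on $A^\omega$. For each normal infinite word $y$ over $A$, the set $\{x\in A^\omega: \rho(x/y)<\rho(x)\}$ has measure $0$.
   Context: Normal: for every $\ell\ge1$ and $u\in A^\ell$, the number of occurrences of $u$ at positions $i\equiv1\bmod\ell$ in $y[1..n]$, divided by $n/\ell$, tends to $|A|^{-\ell}$. A $k$-automaton $\langle Q,A,\delta,I\rangle$ has finite state set, transitions in $Q\times(A\cup\{\varepsilon\})^k\times Q$, initial states $I$; an infinite run is accepting if it starts in $I$ and all label components are infinite. It is $\ell$-deterministic if $I$ is a singleton and, for two transitions from the same state, $\alpha_j=\varepsilon$ for some $j\le\ell$ implies $\alpha'_j=\varepsilon$, and agreement on the first $\ell$ label components implies agreement on the rest and of targets. $\rho(x)$ is the infimum over injective $1$-deterministic $2$-automata $\mathcal T$ of $\liminf_n|v_1\cdots v_n|/n$ where $q_0\xrightarrow{a_1|v_1}q_1\xrightarrow{a_2|v_2}\cdots$ is the run on $x=a_1a_2\cdots$. A compressor is a $2$-deterministic $3$-automaton $\mathcal C$ (input $x$, oracle $y$, output) injective in $x$ for fixed $y$; $\rho_{\mathcal C}(x/y)=\liminf_n|w_1\cdots w_n|/|\alpha_1\cdots\alpha_n|$ for the accepting run $q_0\xrightarrow{\alpha_1,\beta_1|w_1}q_1\cdots$, and $\rho(x/y)$ is the infimum over compressors. *)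

theory Defs
  imports "HOL-Probability.Probability"
begin

definition normal :: "(nat \<Rightarrow> 'a::finite) \<Rightarrow> bool" where
  "normal y \<longleftrightarrow> (\<forall>l::nat. l \<ge> 1 \<longrightarrow> (\<forall>u::'a list. length u = l \<longrightarrow>
     (\<lambda>n. real (card {m. l * m + l \<le> n \<and> (\<forall>t<l. y (l * m + t) = u ! t)}) / (real n / real l))
       \<longlonglongrightarrow> 1 / real CARD('a) ^ l))"

text \<open>A k-automaton: (Q, delta, I) with state set a finite set of naturals;
  labels are lists of length k over 'a option (None = epsilon).\<close>

type_synonym 'a aut = "nat set \<times> (nat \<times> 'a option list \<times> nat) set \<times> nat set"

definition is_automaton :: "nat \<Rightarrow> 'a aut \<Rightarrow> bool" where
  "is_automaton k T \<longleftrightarrow> (case T of (Q, \<delta>, I) \<Rightarrow>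
     finite Q \<and> I \<subseteq> Q \<and> (\<forall>(p, \<alpha>, q) \<in> \<delta>. p \<in> Q \<and> q \<in> Q \<and> length \<alpha> = k))"

definition deterministic :: "nat \<Rightarrow> 'a aut \<Rightarrow> bool" where
  "deterministic l T \<longleftrightarrow> (case T of (Q, \<delta>, I) \<Rightarrow>
     (\<exists>q0. I = {q0}) \<and>
     (\<forall>p \<alpha> q \<alpha>' q'. (p, \<alpha>, q) \<in> \<delta> \<longrightarrow> (p, \<alpha>', q') \<in> \<delta> \<longrightarrow>
        (\<forall>j<l. \<alpha> ! j = None \<longrightarrow> \<alpha>' ! j = None) \<and>
        (take l \<alpha> = take l \<alpha>' \<longrightarrow> \<alpha> = \<alpha>' \<and> q = q')))"

definition accepting_run :: "nat \<Rightarrow> 'a aut \<Rightarrow> (nat \<Rightarrow> nat) \<Rightarrow> (nat \<Rightarrow> 'a option list) \<Rightarrow> bool" where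
  "accepting_run k T qs als \<longleftrightarrow> (case T of (Q, \<delta>, I) \<Rightarrow>
     qs 0 \<in> I \<and> (\<forall>i. (qs i, als i, qs (Suc i)) \<in> \<delta>) \<and>
     (\<forall>j<k. infinite {i. als i ! j \<noteq> None}))"

definition pref :: "(nat \<Rightarrow> 'a option list) \<Rightarrow> nat \<Rightarrow> nat \<Rightarrow> 'a list" where
  "pref als j n = concat (map (\<lambda>i. case als i ! j of None \<Rightarrow> [] | Some a \<Rightarrow> [a]) [0..<n])"

text \<open>The j-th component of the labels reads the (infinite) word w
  (for accepting runs, the component is infinite, so this determines w).\<close>

definition reads :: "(nat \<Rightarrow> 'a option list) \<Rightarrow> nat \<Rightarrow> (nat \<Rightarrow> 'a) \<Rightarrow> bool" where
  "reads als j w \<longleftrightarrow> (\<forall>n. pref als j n = map w [0..<length (pref als j n)])"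

definition injective_transducer :: "'a aut \<Rightarrow> bool" where
  "injective_transducer T \<longleftrightarrow> (\<forall>qs als qs' als' x x' v.
     accepting_run 2 T qs als \<longrightarrow> accepting_run 2 T qs' als' \<longrightarrow>
     reads als 0 x \<longrightarrow> reads als' 0 x' \<longrightarrow> reads als 1 v \<longrightarrow> reads als' 1 v \<longrightarrow> x = x')"

definition rho :: "(nat \<Rightarrow> 'a::finite) \<Rightarrow> ereal" where
  "rho x = (INF (T, qs, als) \<in> {(T, qs, als). is_automaton 2 T \<and> deterministic 1 T \<and>
              injective_transducer T \<and> accepting_run 2 T qs als \<and> reads als 0 x}.
     liminf (\<lambda>n. ereal (real (length (pref als 1 n)) / real (length (pref als 0 n)))))"

definition injective_compressor :: "'a aut \<Rightarrow> bool" where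
  "injective_compressor C \<longleftrightarrow> (\<forall>qs als qs' als' x x' y w.
     accepting_run 3 C qs als \<longrightarrow> accepting_run 3 C qs' als' \<longrightarrow>
     reads als 0 x \<longrightarrow> reads als' 0 x' \<longrightarrow> reads als 1 y \<longrightarrow> reads als' 1 y \<longrightarrow>
     reads als 2 w \<longrightarrow> reads als' 2 w \<longrightarrow> x = x')"

definition compressor :: "'a aut \<Rightarrow> bool" where
  "compressor C \<longleftrightarrow> is_automaton 3 C \<and> deterministic 2 C \<and> injective_compressor C"

definition rho_cond :: "(nat \<Rightarrow> 'a::finite) \<Rightarrow> (nat \<Rightarrow> 'a) \<Rightarrow> ereal" where
  "rho_cond x y = (INF (C, qs, als) \<in> {(C, qs, als). compressor C \<and>
              accepting_run 3 C qs als \<and> reads als 0 x \<and> reads als 1 y}.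
     liminf (\<lambda>n. ereal (real (length (pref als 2 n)) / real (length (pref als 0 n)))))"

definition word_measure :: "(nat \<Rightarrow> 'a::finite) measure" where
  "word_measure = PiM UNIV (\<lambda>_. uniform_count_measure UNIV)"

end

theory Submission
  imports Defs
begin

text \<open>Relative to a normal oracle \<open>y\<close>, no compressor reaches a ratio below 1 except on a null
  set, while \<open>\<rho>(x) \<le> 1\<close> always (and \<open>\<rho> = 0\<close> over a one-letter alphabet).
  Fix a compressor and \<open>r < 1\<close>. By determinism, some oracle word \<open>u\<close> forces every state to
  read input before \<open>u\<close> has been consumed; normality places aligned copies of \<open>u\<close> in \<open>y\<close>
  with gaps growing at most by a factor \<open>1 + \<epsilon>\<close>, so after \<open>n\<close> input symbols at most
  \<open>B (1 + \<epsilon>)^n\<close> oracle symbols have been used. By injectivity, state, output and oracle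
  position then determine the first \<open>n\<close> input symbols, so at most
  \<open>|Q| |A|^\<lceil>r n\<rceil> (B (1 + \<epsilon>)^n + 1)\<close> prefixes of length \<open>n\<close> are compressed below \<open>r\<close>.
  Their measures are summable for small \<open>\<epsilon>\<close>, and Borel--Cantelli finishes the proof.\<close>

section \<open>Label components of runs\<close>

abbreviation pref_len :: "(nat \<Rightarrow> 'a option list) \<Rightarrow> nat \<Rightarrow> nat \<Rightarrow> nat" where
  "pref_len als j n \<equiv> length (pref als j n)"

definition option_to_list :: "'a option \<Rightarrow> 'a list" where
  "option_to_list v = (case v of None \<Rightarrow> [] | Some a \<Rightarrow> [a])"

lemma pref_0[simp]: "pref als j 0 = []"
  by (simp add: pref_def)

lemma pref_Suc: "pref als j (Suc n) = pref als j n @ option_to_list (als n ! j)"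
  by (simp add: pref_def option_to_list_def)

lemma pref_add: "pref als j (a + b) = pref als j a @ pref (\<lambda>i. als (a + i)) j b"
  by (induction b) (simp_all add: pref_Suc)

lemma pref_len_Suc: "pref_len als j (Suc n) = pref_len als j n + (if als n ! j = None then 0 else 1)"
  by (simp add: pref_Suc option_to_list_def split: option.splits)

lemma pref_len_mono: "n \<le> n' \<Longrightarrow> pref_len als j n \<le> pref_len als j n'"
  using pref_add[of als j n "n' - n"] by simp

lemma pref_eq_take: "n \<le> n' \<Longrightarrow> pref als j n = take (pref_len als j n) (pref als j n')"
  using pref_add[of als j n "n' - n"] by simp

lemma pref_len_eq_card: "pref_len als j n = card {i. i < n \<and> als i ! j \<noteq> None}"
proof (induction n)
  case 0 then show ?case by simp
next
  case (Suc n)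
  have "{i. i < Suc n \<and> als i ! j \<noteq> None} =
        {i. i < n \<and> als i ! j \<noteq> None} \<union> (if als n ! j = None then {} else {n})"
    by (auto simp: less_Suc_eq)
  then show ?case using Suc by (simp add: pref_len_Suc)
qed

lemma pref_len_unbounded:
  assumes "infinite {i. als i ! j \<noteq> None}"
  shows "\<exists>n. N \<le> pref_len als j n"
proof -
  obtain F where F: "F \<subseteq> {i. als i ! j \<noteq> None}" "card F = N" "finite F"
    using infinite_arbitrarily_large[OF assms] by blast
  define n where "n = Suc (Max (insert 0 F))"
  have "F \<subseteq> {i. i < n \<and> als i ! j \<noteq> None}"
    using F by (auto simp: n_def less_Suc_eq_le)
  then have "N \<le> card {i. i < n \<and> als i ! j \<noteq> None}"
    using F by (metis card_mono finite_Collect_conjI finite_Collect_less_nat)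
  then show ?thesis by (auto simp: pref_len_eq_card)
qed

lemma pref_len_attains:
  assumes "infinite {i. als i ! j \<noteq> None}" "pref_len als j m \<le> q"
  shows "\<exists>m'\<ge>m. pref_len als j m' = q"
proof -
  obtain n where n: "q \<le> pref_len als j n" using pref_len_unbounded[OF assms(1)] by blast
  define m' where "m' = (LEAST k. q \<le> pref_len als j k)"
  have q: "q \<le> pref_len als j m'" unfolding m'_def by (rule LeastI[of _ n]) (rule n)
  show ?thesis
  proof (cases "m' = 0")
    case True then show ?thesis using q assms(2) pref_len_mono[of 0 m als j]
      by (intro exI[of _ m]) auto
  next
    case False
    then obtain k where k: "m' = Suc k" by (cases m') auto
    have "\<not> q \<le> pref_len als j k" using k unfolding m'_def
      using not_less_Least[of k "\<lambda>k. q \<le> pref_len als j k"] k unfolding m'_def by simp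
    then have e: "pref_len als j m' = q" using q k pref_len_Suc[of als j k] by (auto split: if_splits)
    show ?thesis
    proof (cases "m \<le> m'")
      case True then show ?thesis using e by auto
    next
      case False
      then have "pref_len als j m' \<le> pref_len als j m" by (intro pref_len_mono) auto
      then show ?thesis using e assms(2) by (intro exI[of _ m]) auto
    qed
  qed
qed

lemma reads_iff_nth: "reads als j w \<longleftrightarrow> (\<forall>n. \<forall>k < pref_len als j n. pref als j n ! k = w k)"
  unfolding reads_def
proof (intro iffI allI impI)
  fix n k assume A: "\<forall>n. pref als j n = map w [0..<pref_len als j n]" and k: "k < pref_len als j n"
  define c where "c = pref_len als j n"
  have "pref als j n = map w [0..<c]" using A unfolding c_def by blast
  then show "pref als j n ! k = w k" using k unfolding c_def[symmetric] by simp
next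
  fix n assume A: "\<forall>n. \<forall>k<pref_len als j n. pref als j n ! k = w k"
  show "pref als j n = map w [0..<pref_len als j n]"
  proof (rule nth_equalityI)
    show "length (pref als j n) = length (map w [0..<pref_len als j n])" by simp
    fix i assume "i < length (pref als j n)"
    then show "pref als j n ! i = map w [0..<pref_len als j n] ! i" using A by simp
  qed
qed

lemma reads_nth:
  assumes "reads als j w" "k < pref_len als j n"
  shows "pref als j n ! k = w k"
  using assms reads_iff_nth by blast

lemma reads_Some:
  assumes "reads als j w" "als n ! j = Some a"
  shows "w (pref_len als j n) = a"
proof -
  have "pref_len als j n < pref_len als j (Suc n)" using assms(2) by (simp add: pref_len_Suc)
  then have "pref als j (Suc n) ! pref_len als j n = w (pref_len als j n)"
    using reads_nth[OF assms(1)] by blast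
  then show ?thesis using assms(2) by (simp add: pref_Suc option_to_list_def)
qed

lemma reads_exists:
  assumes "infinite {i. als i ! j \<noteq> None}"
  shows "\<exists>w. reads als j w"
proof -
  define w where "w k = pref als j (SOME n. k < pref_len als j n) ! k" for k
  have ex: "\<exists>n. k < pref_len als j n" for k using pref_len_unbounded[OF assms, of "Suc k"] by (auto simp: Suc_le_eq)
  have wk: "pref als j n ! k = w k" if "k < pref_len als j n" for n k
  proof -
    define n' where "n' = (SOME n. k < pref_len als j n)"
    have kn': "k < pref_len als j n'" unfolding n'_def using someI_ex[OF ex] .
    have "pref als j n ! k = pref als j (max n n') ! k"
      using pref_eq_take[of n "max n n'" als j] that by (metis max.cobounded1 nth_take)
    also have "\<dots> = pref als j n' ! k"
      using pref_eq_take[of n' "max n n'" als j] kn' by (metis max.cobounded2 nth_take)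
    finally show ?thesis unfolding w_def n'_def .
  qed
  have "reads als j w" unfolding reads_def
  proof
    fix n show "pref als j n = map w [0..<pref_len als j n]"
      by (rule nth_equalityI) (auto simp: wk)
  qed
  then show ?thesis by blast
qed

lemma pref_cong: "(\<And>i. i < n \<Longrightarrow> f i = g i) \<Longrightarrow> pref f j n = pref g j n"
  unfolding pref_def by (intro arg_cong[where f=concat] map_cong) auto

lemma reads_pref_eq: "reads als j w \<Longrightarrow> pref als j n = map w [0..<pref_len als j n]"
  unfolding reads_def by blast

lemma infinite_if_unbounded: "(\<forall>N. \<exists>i\<ge>N. P i) \<Longrightarrow> infinite {i::nat. P i}"
  by (simp add: infinite_nat_iff_unbounded_le)

section \<open>Deterministic runs and forcing words\<close>

lemma is_automatonD:
  assumes "is_automaton k (Q,\<delta>,I)" "(p,\<alpha>,q) \<in> \<delta>"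
  shows "length \<alpha> = k" "p \<in> Q" "q \<in> Q"
  using assms unfolding is_automaton_def by auto

lemma deterministic_None_iff:
  assumes "deterministic l (Q,\<delta>,I)" "(p,\<alpha>,q) \<in> \<delta>" "(p,\<alpha>',q') \<in> \<delta>" "j < l"
  shows "\<alpha> ! j = None \<longleftrightarrow> \<alpha>' ! j = None"
  using assms unfolding deterministic_def by blast

lemma deterministic_eq:
  assumes "deterministic l (Q,\<delta>,I)" "(p,\<alpha>,q) \<in> \<delta>" "(p,\<alpha>',q') \<in> \<delta>" "take l \<alpha> = take l \<alpha>'"
  shows "\<alpha> = \<alpha>' \<and> q = q'"
  using assms unfolding deterministic_def by blast

lemma accepting_run_step: "accepting_run k (Q,\<delta>,I) qs als \<Longrightarrow> (qs i, als i, qs (Suc i)) \<in> \<delta>"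
  unfolding accepting_run_def by auto

lemma accepting_run_infinite: "accepting_run k (Q,\<delta>,I) qs als \<Longrightarrow> j < k \<Longrightarrow> infinite {i. als i ! j \<noteq> None}"
  unfolding accepting_run_def by auto

lemma compressor_step_eq:
  assumes aut: "is_automaton 3 (Q,\<delta>,I)" and det: "deterministic 2 (Q,\<delta>,I)"
    and t1: "(p,\<alpha>,q) \<in> \<delta>" and t2: "(p,\<alpha>',q') \<in> \<delta>"
    and a0: "\<alpha> ! 0 = None" and a1: "\<alpha> ! 1 \<noteq> None \<Longrightarrow> \<alpha>' ! 1 = \<alpha> ! 1"
  shows "\<alpha> = \<alpha>' \<and> q = q'"
proof (rule deterministic_eq[OF det t1 t2])
  have "length \<alpha> = 3" "length \<alpha>' = 3" using is_automatonD[OF aut t1] is_automatonD[OF aut t2] by auto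
  moreover have "\<alpha>' ! 0 = None" using deterministic_None_iff[OF det t1 t2, of 0] a0 by auto
  moreover have "\<alpha>' ! 1 = \<alpha> ! 1" using deterministic_None_iff[OF det t1 t2, of 1] a1 by auto
  ultimately show "take 2 \<alpha> = take 2 \<alpha>'"
    using a0 by (auto simp: numeral_3_eq_3 numeral_2_eq_2 length_Suc_conv)
qed

lemma deterministic_runs_agree:
  assumes aut: "is_automaton 3 (Q,\<delta>,I)" and det: "deterministic 2 (Q,\<delta>,I)"
  and tr: "\<forall>i. (qs i, als i, qs (Suc i)) \<in> \<delta>" and tr': "\<forall>i. (qs' i, als' i, qs' (Suc i)) \<in> \<delta>"
  and ry: "reads als 1 y" and ry': "reads als' 1 y"
  and st: "qs m = qs' m'"
  and noinp: "\<forall>i<d. als (m+i) ! 0 = None"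
  and win: "\<forall>t. pref_len als 1 m + t < pref_len als 1 (m+d) \<longrightarrow> y (pref_len als 1 m + t) = y (pref_len als' 1 m' + t)"
  shows "i \<le> d \<Longrightarrow> qs' (m'+i) = qs (m+i) \<and> pref_len als' 1 (m'+i) + pref_len als 1 m = pref_len als 1 (m+i) + pref_len als' 1 m'
     \<and> (\<forall>i'<i. als' (m'+i') = als (m+i'))"
proof (induction i)
  case 0 then show ?case using st by simp
next
  case (Suc i)
  then have i: "i < d" by simp
  from Suc.IH i have s: "qs' (m'+i) = qs (m+i)" and pr: "\<forall>i'<i. als' (m'+i') = als (m+i')"
    and c: "pref_len als' 1 (m'+i) + pref_len als 1 m = pref_len als 1 (m+i) + pref_len als' 1 m'" by auto
  define \<alpha> where "\<alpha> = als (m+i)"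
  define \<alpha>' where "\<alpha>' = als' (m'+i)"
  have t1: "(qs (m+i), \<alpha>, qs (Suc (m+i))) \<in> \<delta>" using tr \<alpha>_def by blast
  have t2: "(qs (m+i), \<alpha>', qs' (Suc (m'+i))) \<in> \<delta>" using tr' \<alpha>'_def s by metis
  have a0: "\<alpha> ! 0 = None" using noinp i \<alpha>_def by auto
  have a1: "\<alpha>' ! 1 = \<alpha> ! 1" if some: "\<alpha> ! 1 \<noteq> None"
  proof -
    obtain b where b: "\<alpha> ! 1 = Some b" using some by blast
    then obtain b' where b': "\<alpha>' ! 1 = Some b'" using deterministic_None_iff[OF det t1 t2, of 1] by auto
    define k where "k = pref_len als 1 (m+i) - pref_len als 1 m"
    have "pref_len als 1 m \<le> pref_len als 1 (m+i)" by (intro pref_len_mono) auto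
    then have k1: "pref_len als 1 m + k = pref_len als 1 (m+i)"
      and k2: "pref_len als' 1 m' + k = pref_len als' 1 (m'+i)" using c unfolding k_def by linarith+
    have "pref_len als 1 (m+i) < pref_len als 1 (Suc (m+i))" using b \<alpha>_def by (simp add: pref_len_Suc)
    also have "\<dots> \<le> pref_len als 1 (m+d)" using i by (intro pref_len_mono) auto
    finally have "y (pref_len als 1 (m+i)) = y (pref_len als' 1 (m'+i))"
      using win[rule_format, of k] unfolding k1 k2 by blast
    then have "b = b'" using reads_Some[OF ry] reads_Some[OF ry'] b b' \<alpha>_def \<alpha>'_def by metis
    then show ?thesis using b b' by simp
  qed
  from compressor_step_eq[OF aut det t1 t2 a0 a1]
  have eq: "\<alpha> = \<alpha>'" "qs (Suc (m+i)) = qs' (Suc (m'+i))" by auto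
  have "pref_len als' 1 (m'+Suc i) + pref_len als 1 m = pref_len als 1 (m+Suc i) + pref_len als' 1 m'"
    using c eq(1) \<alpha>_def \<alpha>'_def by (simp add: pref_len_Suc)
  then show ?case using eq \<alpha>_def \<alpha>'_def pr by (simp add: less_Suc_eq)
qed

definition forces_input :: "'a aut \<Rightarrow> (nat \<Rightarrow> 'a) \<Rightarrow> nat \<Rightarrow> 'a list \<Rightarrow> bool" where
  "forces_input C y s u \<longleftrightarrow> (\<forall>qs als m. accepting_run 3 C qs als \<and> reads als 1 y \<and> qs m = s \<and>
      (\<forall>t<length u. y (pref_len als 1 m + t) = u!t) \<longrightarrow>
      (\<exists>m1\<ge>m. als m1 ! 0 \<noteq> None \<and> pref_len als 1 m1 \<le> pref_len als 1 m + length u))"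

lemma forces_input_append: "forces_input C y s u \<Longrightarrow> forces_input C y s (u @ v)"
  unfolding forces_input_def
proof (intro allI impI)
  fix qs als m
  assume R: "\<forall>qs als m. accepting_run 3 C qs als \<and> reads als 1 y \<and> qs m = s \<and>
      (\<forall>t<length u. y (pref_len als 1 m + t) = u!t) \<longrightarrow>
      (\<exists>m1\<ge>m. als m1 ! 0 \<noteq> None \<and> pref_len als 1 m1 \<le> pref_len als 1 m + length u)"
    and H: "accepting_run 3 C qs als \<and> reads als 1 y \<and> qs m = s \<and>
      (\<forall>t<length (u@v). y (pref_len als 1 m + t) = (u@v)!t)"
  then have "\<forall>t<length u. y (pref_len als 1 m + t) = u!t" by (auto simp: nth_append)
  with R H obtain m1 where "m1 \<ge> m" "als m1 ! 0 \<noteq> None" "pref_len als 1 m1 \<le> pref_len als 1 m + length u" by blast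
  then show "\<exists>m1\<ge>m. als m1 ! 0 \<noteq> None \<and> pref_len als 1 m1 \<le> pref_len als 1 m + length (u@v)"
    by (intro exI[of _ m1]) auto
qed

text \<open>By determinism, whatever one run does on an input-free stretch every other run does
  on the same oracle symbols.\<close>

lemma forces_input_of_run:
  assumes aut: "is_automaton 3 (Q,\<delta>,I)" and det: "deterministic 2 (Q,\<delta>,I)"
    and acc: "accepting_run 3 (Q,\<delta>,I) qs als" and ry: "reads als 1 y"
    and m1: "m \<le> m1" "als m1 ! 0 \<noteq> None" and noinp: "\<forall>i<m1 - m. als (m+i) ! 0 = None"
  shows "forces_input (Q,\<delta>,I) y (qs m) (map y [pref_len als 1 m..<pref_len als 1 m1])"
  unfolding forces_input_def
proof (intro allI impI)
  define p where "p = pref_len als 1 m"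
  define P1 where "P1 = pref_len als 1 m1"
  define w where "w = map y [p..<P1]"
  have pP1: "p \<le> P1" unfolding p_def P1_def using m1(1) by (rule pref_len_mono)
  fix qs' als' m'
  assume H: "accepting_run 3 (Q,\<delta>,I) qs' als' \<and> reads als' 1 y \<and> qs' m' = qs m \<and>
    (\<forall>t<length (map y [pref_len als 1 m..<pref_len als 1 m1]). y (pref_len als' 1 m' + t) =
       map y [pref_len als 1 m..<pref_len als 1 m1] ! t)"
  have tr: "\<forall>i. (qs i, als i, qs (Suc i)) \<in> \<delta>" using acc accepting_run_step by blast
  have tr': "\<forall>i. (qs' i, als' i, qs' (Suc i)) \<in> \<delta>" using H accepting_run_step by blast
  have e: "m + (m1 - m) = m1" using m1 by simp
  have win: "\<forall>t. pref_len als 1 m + t < pref_len als 1 (m + (m1 - m)) \<longrightarrow>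
      y (pref_len als 1 m + t) = y (pref_len als' 1 m' + t)"
    using H unfolding e by auto
  have F: "qs' (m' + (m1 - m)) = qs m1 \<and>
     pref_len als' 1 (m' + (m1 - m)) + p = P1 + pref_len als' 1 m'"
    using deterministic_runs_agree[OF aut det tr tr' ry _ _ noinp win, of "m1 - m"] H
    unfolding p_def P1_def e by auto
  have t1: "(qs m1, als m1, qs (Suc m1)) \<in> \<delta>" using tr by blast
  have t2: "(qs m1, als' (m' + (m1 - m)), qs' (Suc (m' + (m1 - m)))) \<in> \<delta>"
    using tr' F by metis
  have "als' (m' + (m1 - m)) ! 0 \<noteq> None"
    using deterministic_None_iff[OF det t1 t2, of 0] m1(2) by auto
  moreover have "pref_len als' 1 (m' + (m1 - m)) \<le> pref_len als' 1 m' + length w"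
    using F pP1 unfolding w_def by simp linarith
  ultimately show "\<exists>m1'\<ge>m'. als' m1' ! 0 \<noteq> None \<and>
      pref_len als' 1 m1' \<le> pref_len als' 1 m' + length (map y [pref_len als 1 m..<pref_len als 1 m1])"
    unfolding w_def p_def P1_def by (intro exI[of _ "m' + (m1 - m)"]) auto
qed

lemma forces_input_extend:
  assumes aut: "is_automaton 3 (Q,\<delta>,I)" and det: "deterministic 2 (Q,\<delta>,I)"
  shows "\<exists>v. forces_input (Q,\<delta>,I) y s (u @ v)"
proof (cases "forces_input (Q,\<delta>,I) y s u")
  case True then show ?thesis by (intro exI[of _ "[]"]) simp
next
  case False
  then obtain qs als m where acc: "accepting_run 3 (Q,\<delta>,I) qs als" and ry: "reads als 1 y"
    and sm: "qs m = s" and wu: "\<forall>t<length u. y (pref_len als 1 m + t) = u!t"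
    and no: "\<not> (\<exists>m1\<ge>m. als m1 ! 0 \<noteq> None \<and> pref_len als 1 m1 \<le> pref_len als 1 m + length u)"
    unfolding forces_input_def by blast
  have "\<exists>i\<ge>m. als i ! 0 \<noteq> None"
    using accepting_run_infinite[OF acc, of 0] by (simp add: infinite_nat_iff_unbounded_le)
  then obtain i0 where "i0 \<ge> m" "als i0 ! 0 \<noteq> None" by blast
  define m1 where "m1 = (LEAST i. m \<le> i \<and> als i ! 0 \<noteq> None)"
  have m1: "m \<le> m1" "als m1 ! 0 \<noteq> None"
    using LeastI[of "\<lambda>i. m \<le> i \<and> als i ! 0 \<noteq> None" i0] \<open>i0 \<ge> m\<close> \<open>als i0 ! 0 \<noteq> None\<close>
    unfolding m1_def by auto
  have noinp: "\<forall>i<m1 - m. als (m+i) ! 0 = None"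
    using not_less_Least[of "m + _" "\<lambda>i. m \<le> i \<and> als i ! 0 \<noteq> None"] unfolding m1_def by auto
  define p where "p = pref_len als 1 m"
  define P1 where "P1 = pref_len als 1 m1"
  have big: "p + length u < P1" using no m1 unfolding p_def P1_def by force
  have "map y [p..<P1] = u @ map y [p + length u..<P1]"
  proof (rule nth_equalityI)
    fix t assume "t < length (map y [p..<P1])"
    then show "map y [p..<P1] ! t = (u @ map y [p + length u..<P1]) ! t"
      using wu big unfolding p_def by (auto simp: nth_append)
  qed (use big in simp)
  then show ?thesis
    using forces_input_of_run[OF aut det acc ry m1 noinp] sm unfolding p_def P1_def by metis
qed

lemma forces_input_common_word:
  assumes aut: "is_automaton 3 (Q,\<delta>,I)" and det: "deterministic 2 (Q,\<delta>,I)" and fin: "finite S"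
  shows "\<exists>u. \<forall>s\<in>S. forces_input (Q,\<delta>,I) y s u"
  using fin
proof (induction S rule: finite_induct)
  case empty then show ?case by simp
next
  case (insert s S)
  then obtain u where u: "\<forall>s\<in>S. forces_input (Q,\<delta>,I) y s u" by blast
  obtain v where v: "forces_input (Q,\<delta>,I) y s (u @ v)" using forces_input_extend[OF aut det] by blast
  show ?case using u v forces_input_append by (intro exI[of _ "u@v"]) blast
qed

lemma forcing_word_exists:
  assumes aut: "is_automaton 3 (Q,\<delta>,I)" and det: "deterministic 2 (Q,\<delta>,I)"
  shows "\<exists>u. u \<noteq> [] \<and> (\<forall>s\<in>Q. forces_input (Q,\<delta>,I) y s u)"
proof -
  have "finite Q" using aut unfolding is_automaton_def by auto
  then obtain u where "\<forall>s\<in>Q. forces_input (Q,\<delta>,I) y s u" using forces_input_common_word[OF aut det] by blast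
  then show ?thesis using forces_input_append by (intro exI[of _ "u @ [y 0]"]) blast
qed

section \<open>Aligned occurrences in normal words\<close>

definition aligned_occurrence :: "(nat \<Rightarrow> 'a) \<Rightarrow> 'a list \<Rightarrow> nat \<Rightarrow> bool" where
  "aligned_occurrence y u j \<longleftrightarrow> (\<forall>t<length u. y (length u * j + t) = u!t)"

definition aligned_occurrences :: "(nat \<Rightarrow> 'a) \<Rightarrow> 'a list \<Rightarrow> nat \<Rightarrow> nat set" where
  "aligned_occurrences y u n = {j. length u * j + length u \<le> n \<and> aligned_occurrence y u j}"

lemma normal_aligned_occurrences_tendsto:
  fixes y :: "nat \<Rightarrow> 'a::finite"
  assumes "normal y" "u \<noteq> []"
  shows "(\<lambda>n. real (card (aligned_occurrences y u n)) / (real n / real (length u)))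
           \<longlonglongrightarrow> 1 / real CARD('a) ^ length u"
proof -
  have "length u \<ge> 1" using assms(2) by (cases u) auto
  then show ?thesis using assms(1) unfolding normal_def aligned_occurrences_def aligned_occurrence_def
    by blast
qed

lemma finite_aligned_occurrences:
  assumes "u \<noteq> []" shows "finite (aligned_occurrences y u n)"
proof (rule finite_subset[of _ "{..n}"])
  show "aligned_occurrences y u n \<subseteq> {..n}"
  proof
    fix j assume "j \<in> aligned_occurrences y u n"
    then have "length u * j \<le> n" unfolding aligned_occurrences_def by simp
    moreover have "j \<le> length u * j" using assms by (cases u) auto
    ultimately show "j \<in> {..n}" by (meson atMost_iff order_trans)
  qed
qed simp

text \<open>Without an occurrence starting in \<open>[p, n)\<close>, at most the one block straddling \<open>p\<close> is added.\<close>

lemma card_aligned_occurrences_le_if_none_after: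
  assumes "\<not> (\<exists>j. p \<le> length u * j \<and> j \<in> aligned_occurrences y u n)" "u \<noteq> []"
  shows "card (aligned_occurrences y u n) \<le> card (aligned_occurrences y u p) + 1"
proof -
  define L where "L = length u"
  have "aligned_occurrences y u n \<subseteq> aligned_occurrences y u p \<union> {p div L}"
  proof
    fix j assume j: "j \<in> aligned_occurrences y u n"
    show "j \<in> aligned_occurrences y u p \<union> {p div L}"
    proof (cases "L * j + L \<le> p")
      case True then show ?thesis using j by (auto simp: aligned_occurrences_def L_def)
    next
      case False
      then have "L * j < p" using assms(1) j unfolding L_def by (meson not_le)
      moreover have "p < L * Suc j" using False by simp
      ultimately have "p div L = j" by (intro div_nat_eqI) auto
      then show ?thesis by auto
    qed
  qed
  then have "card (aligned_occurrences y u n) \<le> card (aligned_occurrences y u p \<union> {p div L})"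
    by (intro card_mono) (auto simp: finite_aligned_occurrences assms(2))
  also have "\<dots> \<le> card (aligned_occurrences y u p) + 1"
    using card_Un_le[of "aligned_occurrences y u p" "{p div L}"] by simp
  finally show ?thesis .
qed

lemma eventually_within_factor:
  fixes c :: "nat \<Rightarrow> nat" and \<beta> \<eta> L :: real
  assumes lim: "(\<lambda>n. real (c n) / (real n / L)) \<longlonglongrightarrow> \<beta>" and \<beta>pos: "\<beta> > 0" and \<eta>pos: "\<eta> > 0"
    and Lp: "L > 0"
  obtains N where "\<And>n. n \<ge> N \<Longrightarrow> n \<ge> 1 \<Longrightarrow> (1 - \<eta>) * \<beta> * n / L < c n \<and> c n < (1 + \<eta>) * \<beta> * n / L"
proof -
  obtain N where N: "\<forall>n\<ge>N. norm (real (c n) / (real n / L) - \<beta>) < \<beta> * \<eta>"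
    using LIMSEQ_D[OF lim, of "\<beta> * \<eta>"] \<beta>pos \<eta>pos by auto
  have "(1 - \<eta>) * \<beta> * n / L < c n \<and> c n < (1 + \<eta>) * \<beta> * n / L" if "n \<ge> N" "n \<ge> 1" for n
  proof -
    have h: "\<bar>real (c n) * L / n - \<beta>\<bar> < \<beta> * \<eta>" using N that by simp
    have np: "real n > 0" using that by simp
    from h have "(1 - \<eta>) * \<beta> < real (c n) * L / n" "real (c n) * L / n < (1 + \<eta>) * \<beta>"
      by (auto simp: algebra_simps abs_less_iff)
    then show ?thesis using np Lp by (auto simp: field_simps)
  qed
  then show ?thesis by (rule that)
qed

lemma frequencies_separate:
  fixes \<epsilon> \<beta> L p n cp cn :: real
  assumes eps: "\<epsilon> > 0" and \<beta>pos: "\<beta> > 0" and Lp: "L > 0" and n1: "(1 + \<epsilon>) * p \<le> n"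
    and big: "p * (\<beta> * \<epsilon>) \<ge> 2 * L"
    and lo: "(1 - \<epsilon> / (2 * (2 + \<epsilon>))) * \<beta> * n / L < cn"
    and hi: "cp < (1 + \<epsilon> / (2 * (2 + \<epsilon>))) * \<beta> * p / L"
  shows "cn > cp + 1"
proof (rule ccontr)
  assume "\<not> cn > cp + 1"
  define \<eta> where "\<eta> = \<epsilon> / (2 * (2 + \<epsilon>))"
  have A: "(1 - \<eta>) * \<beta> * n / L < (1 + \<eta>) * \<beta> * p / L + 1"
    using lo hi \<open>\<not> cn > cp + 1\<close> unfolding \<eta>_def by linarith
  have \<eta>1: "\<eta> < 1" using eps unfolding \<eta>_def by (simp add: field_simps)
  have "(1 - \<eta>) * \<beta> * ((1 + \<epsilon>) * p) \<le> (1 - \<eta>) * \<beta> * n"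
    using n1 \<eta>1 \<beta>pos by (intro mult_left_mono) auto
  moreover have "(1 - \<eta>) * \<beta> * n < (1 + \<eta>) * \<beta> * p + L"
  proof -
    have "(1 - \<eta>) * \<beta> * n / L < ((1 + \<eta>) * \<beta> * p + L) / L"
      using A Lp by (simp add: add_divide_distrib)
    then show ?thesis using Lp by (simp add: divide_less_cancel)
  qed
  ultimately have B: "(1 - \<eta>) * \<beta> * ((1 + \<epsilon>) * p) < (1 + \<eta>) * \<beta> * p + L" by linarith
  have "(1 - \<eta>) * (1 + \<epsilon>) - (1 + \<eta>) = \<epsilon> - \<eta> * (2 + \<epsilon>)" by (simp add: algebra_simps)
  also have "\<eta> * (2 + \<epsilon>) = \<epsilon> / 2" unfolding \<eta>_def using eps by (simp add: field_simps)
  finally have "(1 - \<eta>) * \<beta> * ((1 + \<epsilon>) * p) - (1 + \<eta>) * \<beta> * p = \<beta> * p * (\<epsilon> / 2)"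
    by (simp add: algebra_simps) (metis (no_types, opaque_lifting) mult.assoc mult.commute distrib_left)
  with B have "\<beta> * p * (\<epsilon> / 2) < L" by linarith
  then show False using big by (simp add: field_simps)
qed

lemma normal_aligned_occurrence_soon:
  fixes y :: "nat \<Rightarrow> 'a::finite" and \<epsilon> :: real
  assumes nor: "normal y" and u: "u \<noteq> []" and eps: "\<epsilon> > 0"
  obtains P0 where "\<And>p. real p \<ge> P0 \<Longrightarrow>
    \<exists>j. p \<le> length u * j \<and> real (length u * j) \<le> (1 + \<epsilon>) * p + 1 \<and> aligned_occurrence y u j"
proof -
  define L where "L = length u"
  have L1: "L \<ge> 1" using u unfolding L_def by (cases u) auto
  define c where "c n = card (aligned_occurrences y u n)" for n
  define \<beta> :: real where "\<beta> = 1 / real CARD('a) ^ L"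
  have \<beta>pos: "\<beta> > 0" unfolding \<beta>_def by simp
  have lim: "(\<lambda>n. real (c n) / (real n / real L)) \<longlonglongrightarrow> \<beta>"
    using normal_aligned_occurrences_tendsto[OF nor u] unfolding c_def \<beta>_def L_def .
  define \<eta> where "\<eta> = \<epsilon> / (2 * (2 + \<epsilon>))"
  have \<eta>pos: "\<eta> > 0" using eps unfolding \<eta>_def by simp
  obtain N where bounds: "\<And>n. n \<ge> N \<Longrightarrow> n \<ge> 1 \<Longrightarrow>
      (1 - \<eta>) * \<beta> * n / L < c n \<and> c n < (1 + \<eta>) * \<beta> * n / L"
    using eventually_within_factor[OF lim \<beta>pos \<eta>pos] L1 by auto
  define P0 :: real where "P0 = max (max (real N) 1) (2 * L / (\<beta> * \<epsilon>))"
  have large: "\<exists>j. p \<le> L * j \<and> real (L * j) \<le> (1 + \<epsilon>) * p + 1 \<and> aligned_occurrence y u j" if p: "real p \<ge> P0" for p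
  proof -
    define n where "n = nat \<lceil>(1 + \<epsilon>) * p\<rceil>"
    have p3: "real N \<le> real p" "1 \<le> real p" "2 * L / (\<beta> * \<epsilon>) \<le> real p"
      using p unfolding P0_def by auto
    have be: "\<beta> * \<epsilon> > 0" using \<beta>pos eps by simp
    have pN: "p \<ge> N" "p \<ge> 1" "real p * (\<beta> * \<epsilon>) \<ge> 2 * L"
      using p3 be by (simp_all add: pos_divide_le_eq)
    have ge0: "(1 + \<epsilon>) * p \<ge> 0" using eps by simp
    have rn: "real n = real_of_int \<lceil>(1 + \<epsilon>) * p\<rceil>" unfolding n_def
      using ge0 by simp
    have n1: "real n \<ge> (1 + \<epsilon>) * p" "real n \<le> (1 + \<epsilon>) * p + 1" unfolding rn by linarith+
    have "(1 + \<epsilon>) * p \<ge> p" using eps by (simp add: algebra_simps)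
    then have "real n \<ge> real p" using n1 by linarith
    then have "n \<ge> p" by simp
    then have nN: "n \<ge> N" "n \<ge> 1" using pN by auto
    have "real (c n) > real (c p) + 1"
    proof (rule frequencies_separate[OF eps \<beta>pos _ n1(1)])
      show "real L > 0" using L1 by simp
      show "real p * (\<beta> * \<epsilon>) \<ge> 2 * real L" using pN(3) by simp
      show "(1 - \<epsilon> / (2 * (2 + \<epsilon>))) * \<beta> * n / L < c n" using bounds[OF nN] unfolding \<eta>_def by blast
      show "c p < (1 + \<epsilon> / (2 * (2 + \<epsilon>))) * \<beta> * p / L" using bounds[OF pN(1,2)] unfolding \<eta>_def by blast
    qed
    then have "\<exists>j. p \<le> L * j \<and> j \<in> aligned_occurrences y u n"
      using card_aligned_occurrences_le_if_none_after[OF _ u, of p y n] unfolding c_def L_def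
      by (metis not_le of_nat_1 of_nat_add of_nat_less_iff)
    then obtain j where j: "p \<le> L * j" "L * j + L \<le> n" "aligned_occurrence y u j"
      unfolding aligned_occurrences_def L_def by blast
    then have "real (L * j) \<le> real n" by (intro of_nat_mono) simp
    then show ?thesis using j n1 by (intro exI[of _ j]) auto
  qed
  show ?thesis using large unfolding L_def by (rule that)
qed

lemma normal_aligned_occurrences_dense:
  fixes y :: "nat \<Rightarrow> 'a::finite" and \<epsilon> :: real
  assumes nor: "normal y" and u: "u \<noteq> []" and eps: "\<epsilon> > 0"
  obtains D :: real where "\<And>p. \<exists>j. p \<le> length u * j \<and> real (length u * j) \<le> (1+\<epsilon>) * real p + D
            \<and> aligned_occurrence y u j"
proof -
  obtain P0 where large: "\<And>p. real p \<ge> P0 \<Longrightarrow>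
      \<exists>j. p \<le> length u * j \<and> real (length u * j) \<le> (1 + \<epsilon>) * p + 1 \<and> aligned_occurrence y u j"
    by (rule normal_aligned_occurrence_soon[OF nor u eps]) blast
  define L where "L = length u"
  note large = large[folded L_def]
  define p0 where "p0 = nat \<lceil>P0\<rceil>"
  obtain j0 where j0: "p0 \<le> L * j0" "real (L * j0) \<le> (1 + \<epsilon>) * p0 + 1" "aligned_occurrence y u j0"
    using large[of p0] unfolding p0_def by (metis of_nat_ceiling)
  define D where "D = (1 + \<epsilon>) * p0 + 1"
  have "\<forall>p. \<exists>j. p \<le> L * j \<and> real (L * j) \<le> (1+\<epsilon>) * p + D \<and> aligned_occurrence y u j"
  proof
    fix p
    show "\<exists>j. p \<le> L * j \<and> real (L * j) \<le> (1+\<epsilon>) * p + D \<and> aligned_occurrence y u j"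
    proof (cases "real p \<ge> P0")
      case True
      then obtain j where "p \<le> L * j" "real (L * j) \<le> (1 + \<epsilon>) * p + 1" "aligned_occurrence y u j" using large by blast
      moreover have "1 \<le> D" unfolding D_def using eps by simp
      ultimately show ?thesis by (intro exI[of _ j]) auto
    next
      case False
      then have "p \<le> p0" unfolding p0_def by linarith
      moreover have "0 \<le> (1+\<epsilon>) * p" using eps by simp
      ultimately show ?thesis using j0 unfolding D_def by (intro exI[of _ j0]) auto
    qed
  qed
  then show ?thesis using that unfolding L_def by blast
qed

section \<open>Oracle use of a compressor\<close>

lemma input_read_soon:
  assumes aut: "is_automaton 3 (Q,\<delta>,I)"
    and R: "\<forall>s\<in>Q. forces_input (Q,\<delta>,I) y s u"
    and gap: "\<And>p. \<exists>j. p \<le> length u * j \<and> real (length u * j) \<le> (1+\<epsilon>) * real p + D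
            \<and> aligned_occurrence y u j"
    and acc: "accepting_run 3 (Q,\<delta>,I) qs als" and ry: "reads als 1 y"
  shows "\<exists>m1\<ge>m. als m1 ! 0 \<noteq> None \<and> real (pref_len als 1 m1) \<le> (1+\<epsilon>) * real (pref_len als 1 m) + (D + length u)"
proof -
  obtain j where j: "pref_len als 1 m \<le> length u * j" "real (length u * j) \<le> (1+\<epsilon>) * real (pref_len als 1 m) + D"
    "aligned_occurrence y u j" using gap by blast
  have inf1: "infinite {i. als i ! 1 \<noteq> None}" using accepting_run_infinite[OF acc] by simp
  obtain m' where m': "m' \<ge> m" "pref_len als 1 m' = length u * j" using pref_len_attains[OF inf1 j(1)] by blast
  have "(qs m', als m', qs (Suc m')) \<in> \<delta>" using accepting_run_step[OF acc] .
  then have "qs m' \<in> Q" using is_automatonD[OF aut] by blast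
  then have "forces_input (Q,\<delta>,I) y (qs m') u" using R by blast
  moreover have "\<forall>t<length u. y (pref_len als 1 m' + t) = u!t"
    using j(3) m'(2) unfolding aligned_occurrence_def by simp
  ultimately have "\<exists>m1\<ge>m'. als m1 ! 0 \<noteq> None \<and> pref_len als 1 m1 \<le> pref_len als 1 m' + length u"
    unfolding forces_input_def using acc ry by blast
  then obtain m1 where m1: "m1 \<ge> m'" "als m1 ! 0 \<noteq> None" "pref_len als 1 m1 \<le> pref_len als 1 m' + length u"
    by blast
  have "pref_len als 1 m1 \<le> length u * j + length u" using m1(3) m'(2) by simp
  then have "real (pref_len als 1 m1) \<le> real (length u * j + length u)" by (rule of_nat_mono)
  then have "real (pref_len als 1 m1) \<le> real (length u * j) + length u" by simp
  then show ?thesis using m1 m' j(2) by (intro exI[of _ m1]) auto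
qed

lemma pref_len_le_at_next_input:
  assumes "t \<le> m1" "als m1 ! i \<noteq> None" "pref_len als i m \<le> pref_len als i t"
  shows "pref_len als j m \<le> pref_len als j m1"
proof -
  have "pref_len als i t < pref_len als i (Suc m1)"
    using pref_len_mono[OF assms(1), of als i] assms(2) by (auto simp: pref_len_Suc)
  then have "m < Suc m1" using assms(3) pref_len_mono[of "Suc m1" m als i] by linarith
  then show ?thesis by (intro pref_len_mono) simp
qed

lemma pref_len_reaches:
  assumes "pref_len als j m = Suc n"
  obtains t where "pref_len als j t = n" "pref_len als j (Suc t) = Suc n"
  using assms
proof (induction m)
  case 0 then show ?case by simp
next
  case (Suc m)
  show ?case
  proof (cases "pref_len als j m = Suc n")
    case True then show ?thesis using Suc by blast
  next
    case False
    then have "pref_len als j m = n" using Suc.prems(2) by (simp add: pref_len_Suc split: if_splits)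
    then show ?thesis using Suc by blast
  qed
qed

text \<open>The constant \<open>(1 + \<epsilon> + E) / \<epsilon>\<close> absorbs the additive terms of the recursion
  \<open>b (n + 1) \<le> (1 + \<epsilon>) (b n + 1) + E\<close> for the oracle use \<open>b n\<close>.\<close>

lemma oracle_use_exponential_bound:
  fixes \<epsilon> E :: real
  assumes eps: "\<epsilon> > 0" and E: "E \<ge> 0"
    and W: "\<forall>m. \<exists>m1\<ge>m. als m1 ! 0 \<noteq> None \<and> real (pref_len als 1 m1) \<le> (1+\<epsilon>) * real (pref_len als 1 m) + E"
  shows "\<forall>m. pref_len als 0 m = n \<longrightarrow> real (pref_len als 1 m) + (1+\<epsilon>+E)/\<epsilon> \<le> (E + (1+\<epsilon>+E)/\<epsilon>) * (1+\<epsilon>)^n"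
proof (induction n)
  case 0
  show ?case
  proof (intro allI impI)
    fix m assume m: "pref_len als 0 m = 0"
    obtain m1 where m1: "als m1 ! 0 \<noteq> None" "real (pref_len als 1 m1) \<le> (1+\<epsilon>) * real (pref_len als 1 0) + E"
      using W by blast
    have "pref_len als 1 m \<le> pref_len als 1 m1"
      using m m1(1) by (intro pref_len_le_at_next_input[of 0 m1 als 0 m]) auto
    then show "real (pref_len als 1 m) + (1+\<epsilon>+E)/\<epsilon> \<le> (E + (1+\<epsilon>+E)/\<epsilon>) * (1+\<epsilon>)^0"
      using m1(2) by simp
  qed
next
  case (Suc n)
  define c where "c = (1+\<epsilon>+E)/\<epsilon>"
  show ?case
  proof (intro allI impI)
    fix m assume m: "pref_len als 0 m = Suc n"
    obtain t where t: "pref_len als 0 t = n" "pref_len als 0 (Suc t) = Suc n"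
      using pref_len_reaches[OF m] .
    have IH: "real (pref_len als 1 t) + c \<le> (E + c) * (1+\<epsilon>)^n" using Suc.IH t(1) unfolding c_def by blast
    have c1: "pref_len als 1 (Suc t) \<le> pref_len als 1 t + 1" by (simp add: pref_len_Suc)
    obtain m1 where m1: "m1 \<ge> Suc t" "als m1 ! 0 \<noteq> None"
      "real (pref_len als 1 m1) \<le> (1+\<epsilon>) * real (pref_len als 1 (Suc t)) + E"
      using W by blast
    have "pref_len als 1 m \<le> pref_len als 1 m1"
      using m t(2) m1(1,2) by (intro pref_len_le_at_next_input[of "Suc t" m1 als 0 m]) auto
    then have "real (pref_len als 1 m) \<le> (1+\<epsilon>) * real (pref_len als 1 (Suc t)) + E" using m1(3) by linarith
    also have "\<dots> \<le> (1+\<epsilon>) * (real (pref_len als 1 t) + 1) + E"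
      using c1 eps by (intro add_right_mono mult_left_mono) auto
    also have "\<dots> = (1+\<epsilon>) * (real (pref_len als 1 t) + c) - c"
      unfolding c_def using eps by (simp add: field_simps)
    finally have "real (pref_len als 1 m) + c \<le> (1+\<epsilon>) * (real (pref_len als 1 t) + c)" by simp
    also have "\<dots> \<le> (1+\<epsilon>) * ((E + c) * (1+\<epsilon>)^n)" using IH eps by (intro mult_left_mono) auto
    also have "\<dots> = (E + c) * (1+\<epsilon>)^Suc n" by simp
    finally show "real (pref_len als 1 m) + (1+\<epsilon>+E)/\<epsilon> \<le> (E + (1+\<epsilon>+E)/\<epsilon>) * (1+\<epsilon>)^Suc n"
      unfolding c_def by simp
  qed
qed

lemma oracle_use_exponentially_bounded:
  fixes y :: "nat \<Rightarrow> 'a::finite" and \<epsilon> :: real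
  assumes nor: "normal y" and aut: "is_automaton 3 (Q,\<delta>,I)" and det: "deterministic 2 (Q,\<delta>,I)"
    and eps: "\<epsilon> > 0"
  obtains B :: real where "B \<ge> 0" "\<And>qs als m. accepting_run 3 (Q,\<delta>,I) qs als \<Longrightarrow> reads als 1 y \<Longrightarrow>
    real (pref_len als 1 m) \<le> B * (1+\<epsilon>) ^ pref_len als 0 m"
proof -
  obtain u where u: "u \<noteq> []" "\<forall>s\<in>Q. forces_input (Q,\<delta>,I) y s u"
    using forcing_word_exists[OF aut det] by blast
  obtain D where gap: "\<And>p. \<exists>j. p \<le> length u * j \<and> real (length u * j) \<le> (1+\<epsilon>) * real p + D
      \<and> aligned_occurrence y u j"
    using normal_aligned_occurrences_dense[OF nor u(1) eps] by blast
  have D0: "D \<ge> 0"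
  proof -
    obtain j where "real (length u * j) \<le> (1+\<epsilon>) * real (0::nat) + D" using gap by blast
    moreover have "0 \<le> real (length u * j)" by simp
    ultimately show ?thesis by linarith
  qed
  define E where "E = D + length u"
  have E0: "E \<ge> 0" unfolding E_def using D0 by simp
  define c where "c = (1+\<epsilon>+E)/\<epsilon>"
  have c0: "c \<ge> 0" unfolding c_def using eps E0 by simp
  show ?thesis
  proof (rule that[of "E + c"])
    show "E + c \<ge> 0" using E0 c0 by simp
    fix qs als m assume acc: "accepting_run 3 (Q,\<delta>,I) qs als" and ry: "reads als 1 y"
    have "\<forall>m. \<exists>m1\<ge>m. als m1 ! 0 \<noteq> None \<and> real (pref_len als 1 m1) \<le> (1+\<epsilon>) * real (pref_len als 1 m) + E"
      using input_read_soon[OF aut u(2) gap acc ry] unfolding E_def by blast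
    from oracle_use_exponential_bound[OF eps E0 this]
    have "real (pref_len als 1 m) + c \<le> (E + c) * (1+\<epsilon>) ^ pref_len als 0 m"
      unfolding c_def by blast
    then show "real (pref_len als 1 m) \<le> (E + c) * (1+\<epsilon>) ^ pref_len als 0 m" using c0 by linarith
  qed
qed

section \<open>Splicing runs\<close>

definition splice_seq :: "nat \<Rightarrow> nat \<Rightarrow> (nat \<Rightarrow> 'b) \<Rightarrow> (nat \<Rightarrow> 'b) \<Rightarrow> nat \<Rightarrow> 'b" where
  "splice_seq m m' f g i = (if i < m then f i else g (i - m + m'))"

lemma pref_splice_le: "N \<le> m \<Longrightarrow> pref (splice_seq m m' als als') j N = pref als j N"
  by (intro pref_cong) (auto simp: splice_seq_def)

lemma pref_splice_add:
  "pref (splice_seq m m' als als') j (m + t) = pref als j m @ pref (\<lambda>i. als' (m' + i)) j t"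
proof -
  have "(\<lambda>i. splice_seq m m' als als' (m + i)) = (\<lambda>i. als' (m' + i))"
    by (auto simp: splice_seq_def add.commute)
  then show ?thesis using pref_add[of "splice_seq m m' als als'" j m t] pref_splice_le[of m m] by simp
qed

lemma accepting_run_splice:
  assumes acc: "accepting_run k (Q,\<delta>,I) qs als" and acc': "accepting_run k (Q,\<delta>,I) qs' als'"
    and st: "qs m = qs' m'"
  shows "accepting_run k (Q,\<delta>,I) (splice_seq m m' qs qs') (splice_seq m m' als als')"
proof -
  have tr: "(splice_seq m m' qs qs' i, splice_seq m m' als als' i, splice_seq m m' qs qs' (Suc i)) \<in> \<delta>" for i
  proof -
    consider "Suc i < m" | "Suc i = m" | "m \<le> i" by linarith
    then show ?thesis
    proof cases
      case 1 then show ?thesis using accepting_run_step[OF acc, of i] by (simp add: splice_seq_def)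
    next
      case 2 then show ?thesis using accepting_run_step[OF acc, of i] st by (simp add: splice_seq_def)
    next
      case 3
      then have "Suc i - m + m' = Suc (i - m + m')" by simp
      then show ?thesis using accepting_run_step[OF acc', of "i - m + m'"] 3 by (simp add: splice_seq_def)
    qed
  qed
  have init: "splice_seq m m' qs qs' 0 \<in> I"
    using acc acc' st unfolding accepting_run_def splice_seq_def by (cases "m = 0") auto
  have inf: "infinite {i. splice_seq m m' als als' i ! j \<noteq> None}" if j: "j < k" for j
  proof (rule infinite_if_unbounded, intro allI)
    fix N
    have "\<exists>i'\<ge>N + m'. als' i' ! j \<noteq> None"
      using accepting_run_infinite[OF acc' j] by (simp add: infinite_nat_iff_unbounded_le)
    then obtain i' where i': "i' \<ge> N + m'" "als' i' ! j \<noteq> None" by blast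
    have "splice_seq m m' als als' (i' - m' + m) = als' i'" using i'(1) unfolding splice_seq_def by auto
    then show "\<exists>i\<ge>N. splice_seq m m' als als' i ! j \<noteq> None" using i' by (intro exI[of _ "i' - m' + m"]) auto
  qed
  show ?thesis unfolding accepting_run_def using tr init inf by auto
qed

lemma reads_splice:
  assumes rd': "reads als' j x'" and c: "pref_len als j m = pref_len als' j m'"
    and p: "pref als j m = map x [0..<pref_len als j m]"
  shows "reads (splice_seq m m' als als') j (\<lambda>i. if i < pref_len als j m then x i else x' i)"
  unfolding reads_iff_nth
proof (intro allI impI)
  define c where "c = pref_len als j m"
  have px: "pref als j m ! k = x k" if "k < c" for k
    using that unfolding c_def by (subst p) simp
  fix N k assume k: "k < pref_len (splice_seq m m' als als') j N"
  show "pref (splice_seq m m' als als') j N ! k = (if k < pref_len als j m then x k else x' k)"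
  proof (cases "N \<le> m")
    case True
    then have e: "pref (splice_seq m m' als als') j N = take (pref_len als j N) (pref als j m)"
      using pref_splice_le pref_eq_take by metis
    have "pref_len als j N \<le> c" unfolding c_def using True by (rule pref_len_mono)
    then show ?thesis using k px unfolding e c_def[symmetric] by simp
  next
    case False
    then obtain t where t: "N = m + t" by (metis le_add_diff_inverse nat_le_linear)
    have e': "pref als' j (m' + t) = pref als' j m' @ pref (\<lambda>i. als' (m' + i)) j t" by (rule pref_add)
    show ?thesis
    proof (cases "k < c")
      case True then show ?thesis using px unfolding t pref_splice_add c_def by (simp add: nth_append)
    next
      case False
      then have "pref (splice_seq m m' als als') j N ! k = pref als' j (m' + t) ! k"
        using c unfolding t pref_splice_add e' c_def by (simp add: nth_append)
      also have "\<dots> = x' k"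
      proof (rule reads_nth[OF rd'])
        show "k < pref_len als' j (m' + t)" using k c unfolding t pref_splice_add e' by simp
      qed
      finally show ?thesis using False unfolding c_def by simp
    qed
  qed
qed

text \<open>Two such runs can be spliced at the common configuration, so injectivity forces equal inputs.\<close>

lemma compressor_config_determines_input:
  assumes comp: "compressor (Q,\<delta>,I)"
    and acc: "accepting_run 3 (Q,\<delta>,I) qs als" and r0: "reads als 0 x" and r1: "reads als 1 y"
    and acc': "accepting_run 3 (Q,\<delta>,I) qs' als'" and r0': "reads als' 0 x'" and r1': "reads als' 1 y"
    and st: "qs m = qs' m'" and out: "pref als 2 m = pref als' 2 m'"
    and oc: "pref_len als 1 m = pref_len als' 1 m'" and ic: "pref_len als 0 m = pref_len als' 0 m'"
  shows "\<forall>i < pref_len als 0 m. x i = x' i"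
proof -
  obtain w' where w': "reads als' 2 w'" using reads_exists[OF accepting_run_infinite[OF acc', of 2]] by auto
  let ?als = "splice_seq m m' als als'"
  have rd0: "reads ?als 0 (\<lambda>i. if i < pref_len als 0 m then x i else x' i)"
    using reads_splice[OF r0' ic reads_pref_eq[OF r0]] .
  have "reads ?als 1 (\<lambda>i. if i < pref_len als 1 m then y i else y i)"
    using reads_splice[OF r1' oc reads_pref_eq[OF r1]] .
  then have rd1: "reads ?als 1 y" by simp
  have "pref als 2 m = map w' [0..<pref_len als 2 m]" using reads_pref_eq[OF w', of m'] unfolding out .
  from reads_splice[OF w' _ this] have rd2: "reads ?als 2 w'" using out by simp
  have acc'': "accepting_run 3 (Q,\<delta>,I) (splice_seq m m' qs qs') ?als" by (rule accepting_run_splice[OF acc acc' st])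
  have inj: "injective_compressor (Q,\<delta>,I)" using comp unfolding compressor_def by blast
  have eq: "(\<lambda>i. if i < pref_len als 0 m then x i else x' i) = x'"
    using inj[unfolded injective_compressor_def, rule_format, OF acc'' acc' rd0 r0' rd1 r1' rd2 w'] .
  show ?thesis
  proof (intro allI impI)
    fix i assume "i < pref_len als 0 m"
    then show "x i = x' i" using fun_cong[OF eq, of i] by simp
  qed
qed

section \<open>Counting compressible prefixes\<close>

lemma sum_powers_le_power_Suc: "(a::nat) \<ge> 2 \<Longrightarrow> (\<Sum>i\<le>k. a^i) \<le> a ^ Suc k"
proof (induction k)
  case 0 then show ?case by simp
next
  case (Suc k)
  have "(\<Sum>i\<le>Suc k. a^i) = (\<Sum>i\<le>k. a^i) + a ^ Suc k" by simp
  also have "\<dots> \<le> a ^ Suc k + a ^ Suc k" using Suc by simp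
  also have "\<dots> = 2 * a ^ Suc k" by simp
  also have "\<dots> \<le> a * a ^ Suc k" using Suc.prems by (intro mult_right_mono) auto
  finally show ?case by simp
qed

lemma card_lists_length_less_le:
  assumes "CARD('a::finite) \<ge> 2"
  shows "card {w::'a list. length w < M} \<le> CARD('a) ^ M"
proof (cases M)
  case 0 then show ?thesis by simp
next
  case (Suc k)
  have "{w::'a list. length w < M} = {xs. set xs \<subseteq> UNIV \<and> length xs \<le> k}" using Suc by auto
  then have "card {w::'a list. length w < M} = (\<Sum>i\<le>k. CARD('a)^i)"
    using card_lists_length_le[of "UNIV :: 'a set" k] by simp
  also have "\<dots> \<le> CARD('a) ^ M" using sum_powers_le_power_Suc[OF assms] Suc by simp
  finally show ?thesis .
qed

lemma power_ceiling_le: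
  fixes a r :: real
  assumes a: "a \<ge> 1" and r: "r \<ge> 0"
  shows "a ^ nat \<lceil>r * real n\<rceil> \<le> a * (a powr r) ^ n"
proof -
  have a0: "a > 0" using a by simp
  have "a ^ nat \<lceil>r * real n\<rceil> = a powr real (nat \<lceil>r * real n\<rceil>)" using powr_realpow[OF a0] by simp
  also have "\<dots> \<le> a powr (1 + r * real n)"
  proof (rule powr_mono)
    have "r * real n \<ge> 0" using r by simp
    then have "real (nat \<lceil>r * real n\<rceil>) = real_of_int \<lceil>r * real n\<rceil>" by simp
    then show "real (nat \<lceil>r * real n\<rceil>) \<le> 1 + r * real n" by linarith
  qed (rule a)
  also have "\<dots> = a * (a powr r) ^ n"
    using a0 by (simp add: powr_add powr_power mult.commute)
  finally show ?thesis .
qed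

definition compressible_words :: "'a aut \<Rightarrow> (nat \<Rightarrow> 'a) \<Rightarrow> real \<Rightarrow> nat \<Rightarrow> (nat \<Rightarrow> 'a) set" where
  "compressible_words C y r n = {x. \<exists>qs als m. accepting_run 3 C qs als \<and> reads als 0 x \<and> reads als 1 y \<and>
      pref_len als 0 m = n \<and> real (pref_len als 2 m) < r * real n}"

definition compressible_prefixes :: "'a aut \<Rightarrow> (nat \<Rightarrow> 'a) \<Rightarrow> real \<Rightarrow> nat \<Rightarrow> 'a list set" where
  "compressible_prefixes C y r n = (\<lambda>x. map x [0..<n]) ` compressible_words C y r n"

lemma card_le_card_if_witnessed_inj:
  assumes fin: "finite T" and ex: "\<And>u. u \<in> U \<Longrightarrow> \<exists>z. P u z \<and> f z \<in> T"
    and inj: "\<And>u1 u2 z1 z2. P u1 z1 \<Longrightarrow> P u2 z2 \<Longrightarrow> f z1 = f z2 \<Longrightarrow> u1 = u2"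
  shows "card U \<le> card T"
proof -
  define wit where "wit u = (SOME z. P u z \<and> f z \<in> T)" for u
  have wit: "P u (wit u) \<and> f (wit u) \<in> T" if "u \<in> U" for u
    unfolding wit_def using someI_ex[OF ex[OF that]] .
  have "inj_on (f \<circ> wit) U"
  proof (rule inj_onI)
    fix u1 u2 assume "u1 \<in> U" "u2 \<in> U" "(f \<circ> wit) u1 = (f \<circ> wit) u2"
    then show "u1 = u2" using wit inj by (metis comp_apply)
  qed
  moreover have "(f \<circ> wit) ` U \<subseteq> T" using wit by auto
  ultimately show ?thesis using card_inj_on_le fin by blast
qed

lemma card_compressible_prefixes_le:
  fixes y :: "nat \<Rightarrow> 'a::finite"
  assumes comp: "compressor (Q,\<delta>,I)"
    and K: "\<forall>qs als m. accepting_run 3 (Q,\<delta>,I) qs als \<and> reads als 1 y \<and> pref_len als 0 m = n \<longrightarrow> pref_len als 1 m \<le> K"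
  shows "card (compressible_prefixes (Q,\<delta>,I) y r n) \<le> card Q * card {w::'a list. length w < nat \<lceil>r * real n\<rceil>} * (K + 1)"
proof -
  let ?C = "(Q,\<delta>,I)"
  let ?M = "nat \<lceil>r * real n\<rceil>"
  define P where "P u (z :: (nat \<Rightarrow> 'a) \<times> (nat \<Rightarrow> nat) \<times> (nat \<Rightarrow> 'a option list) \<times> nat) \<longleftrightarrow>
      (case z of (x, qs, als, m) \<Rightarrow> map x [0..<n] = u \<and> accepting_run 3 ?C qs als \<and> reads als 0 x \<and> reads als 1 y \<and>
      pref_len als 0 m = n \<and> real (pref_len als 2 m) < r * real n)" for u z
  define config where "config z = (case z of (x, qs, als, m) \<Rightarrow> (qs m, pref als 2 m, pref_len als 1 m))"
    for z :: "(nat \<Rightarrow> 'a) \<times> (nat \<Rightarrow> nat) \<times> (nat \<Rightarrow> 'a option list) \<times> nat"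
  define T where "T = Q \<times> {w::'a list. length w < ?M} \<times> {..K}"
  have aut: "is_automaton 3 ?C" using comp unfolding compressor_def by blast
  have "finite {w::'a list. length w < ?M}"
    using finite_lists_length_le[of "UNIV :: 'a set" ?M] by (rule finite_subset[rotated]) auto
  then have finT: "finite T" unfolding T_def using aut by (simp add: is_automaton_def)
  have "card (compressible_prefixes ?C y r n) \<le> card T"
  proof (rule card_le_card_if_witnessed_inj[OF finT])
    fix u assume "u \<in> compressible_prefixes ?C y r n"
    then obtain x qs als m where p: "P u (x, qs, als, m)"
      unfolding compressible_prefixes_def compressible_words_def P_def by auto
    then have acc: "accepting_run 3 ?C qs als" and ry: "reads als 1 y" and c0: "pref_len als 0 m = n"
      and c2: "real (pref_len als 2 m) < r * real n" unfolding P_def by auto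
    have "qs m \<in> Q" using is_automatonD(2)[OF aut accepting_run_step[OF acc]] .
    moreover have "pref_len als 1 m \<le> K" using K acc ry c0 by blast
    moreover have "pref_len als 2 m < ?M" using c2 by linarith
    ultimately show "\<exists>z. P u z \<and> config z \<in> T"
      using p unfolding config_def T_def by (intro exI[of _ "(x, qs, als, m)"]) auto
  next
    fix u1 u2 z1 z2 assume p1: "P u1 z1" and p2: "P u2 z2" and e: "config z1 = config z2"
    obtain x1 qs1 als1 m1 where z1: "z1 = (x1, qs1, als1, m1)" by (cases z1) auto
    obtain x2 qs2 als2 m2 where z2: "z2 = (x2, qs2, als2, m2)" by (cases z2) auto
    have e': "qs1 m1 = qs2 m2" "pref als1 2 m1 = pref als2 2 m2" "pref_len als1 1 m1 = pref_len als2 1 m2"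
      using e unfolding z1 z2 config_def by auto
    have a1: "map x1 [0..<n] = u1" "accepting_run 3 ?C qs1 als1" "reads als1 0 x1" "reads als1 1 y"
      "pref_len als1 0 m1 = n" using p1 unfolding z1 P_def by auto
    have a2: "map x2 [0..<n] = u2" "accepting_run 3 ?C qs2 als2" "reads als2 0 x2" "reads als2 1 y"
      "pref_len als2 0 m2 = n" using p2 unfolding z2 P_def by auto
    have "\<forall>i < pref_len als1 0 m1. x1 i = x2 i"
      using compressor_config_determines_input[OF comp a1(2,3,4) a2(2,3,4) e'] a1(5) a2(5) by simp
    then show "u1 = u2" using a1(1,5) a2(1) by auto
  qed
  also have "card T = card Q * card {w::'a list. length w < ?M} * (K + 1)"
    unfolding T_def by (simp add: card_cartesian_product algebra_simps)
  finally show ?thesis .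
qed

section \<open>Cylinder sets\<close>

lemma prob_space_word_measure: "prob_space (word_measure :: (nat \<Rightarrow> 'a::finite) measure)"
  unfolding word_measure_def
  by (intro prob_space_PiM prob_space_uniform_count_measure) auto

lemma cylinder_eq_prod_emb:
  assumes "length u = n"
  shows "{x :: nat \<Rightarrow> 'a::finite. map x [0..<n] = u} =
    prod_emb UNIV (\<lambda>_. uniform_count_measure UNIV) {..<n} (\<Pi>\<^sub>E i\<in>{..<n}. {u!i})"
proof -
  have "map x [0..<n] = u \<longleftrightarrow> (\<forall>i<n. x i = u ! i)" for x :: "nat \<Rightarrow> 'a"
    using assms by (auto simp: list_eq_iff_nth_eq)
  then show ?thesis
    by (auto simp: prod_emb_iff space_uniform_count_measure PiE_iff)
qed

lemma cylinder_in_sets: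
  assumes "length u = n"
  shows "{x :: nat \<Rightarrow> 'a::finite. map x [0..<n] = u} \<in> sets word_measure"
  unfolding cylinder_eq_prod_emb[OF assms] word_measure_def
  by (rule sets_PiM_I) (auto simp: sets_uniform_count_measure)

lemma emeasure_cylinder:
  assumes "length u = n"
  shows "emeasure word_measure {x :: nat \<Rightarrow> 'a::finite. map x [0..<n] = u} = ennreal ((1 / real CARD('a))^n)"
proof -
  have "emeasure word_measure {x :: nat \<Rightarrow> 'a. map x [0..<n] = u} =
      (\<Prod>i\<in>{..<n}. emeasure (uniform_count_measure (UNIV :: 'a set)) {u!i})"
    unfolding cylinder_eq_prod_emb[OF assms] word_measure_def
    by (rule emeasure_PiM_emb) (auto intro: prob_space_uniform_count_measure simp: sets_uniform_count_measure)
  also have "\<dots> = (\<Prod>i\<in>{..<n}. ennreal (1 / real CARD('a)))"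
    by (intro prod.cong refl) (simp add: emeasure_uniform_count_measure ennreal_of_nat_eq_real_of_nat
        divide_ennreal[symmetric])
  also have "\<dots> = ennreal ((1 / real CARD('a))^n)" by (simp add: prod_ennreal ennreal_power)
  finally show ?thesis .
qed

lemma prefix_set_in_sets:
  assumes "V \<subseteq> {u. length u = n}"
  shows "{x :: nat \<Rightarrow> 'a::finite. map x [0..<n] \<in> V} \<in> sets word_measure"
proof -
  have "finite {xs::'a list. set xs \<subseteq> UNIV \<and> length xs = n}" by (rule finite_lists_length_eq) simp
  then have "finite {xs::'a list. length xs = n}" by simp
  then have fin: "finite V" using assms finite_subset by blast
  have "{x :: nat \<Rightarrow> 'a. map x [0..<n] \<in> V} = (\<Union>u\<in>V. {x. map x [0..<n] = u})" by auto
  also have "\<dots> \<in> sets word_measure" using fin assms by (intro sets.finite_UN cylinder_in_sets) auto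
  finally show ?thesis .
qed

lemma measure_prefix_set_le:
  assumes "V \<subseteq> {u. length u = n}"
  shows "measure word_measure {x :: nat \<Rightarrow> 'a::finite. map x [0..<n] \<in> V} \<le> real (card V) * (1 / real CARD('a))^n"
proof -
  interpret prob_space "word_measure :: (nat \<Rightarrow> 'a) measure" by (rule prob_space_word_measure)
  have "finite {xs::'a list. set xs \<subseteq> UNIV \<and> length xs = n}" by (rule finite_lists_length_eq) simp
  then have "finite {xs::'a list. length xs = n}" by simp
  then have fin: "finite V" using assms finite_subset by blast
  have "{x :: nat \<Rightarrow> 'a. map x [0..<n] \<in> V} = (\<Union>u\<in>V. {x. map x [0..<n] = u})" by auto
  then have "measure word_measure {x :: nat \<Rightarrow> 'a. map x [0..<n] \<in> V} \<le>
      (\<Sum>u\<in>V. measure word_measure {x :: nat \<Rightarrow> 'a. map x [0..<n] = u})"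
    using fin assms by (auto intro!: finite_measure_subadditive_finite cylinder_in_sets)
  also have "\<dots> = (\<Sum>u\<in>V. (1 / real CARD('a))^n)"
    using assms by (intro sum.cong refl) (auto simp: measure_def emeasure_cylinder)
  also have "\<dots> = real (card V) * (1 / real CARD('a))^n" by simp
  finally show ?thesis .
qed

section \<open>Compressible words form a null set\<close>

definition compression_ratio :: "(nat \<Rightarrow> 'a option list) \<Rightarrow> ereal" where
  "compression_ratio als = liminf (\<lambda>n. ereal (real (pref_len als 2 n) / real (pref_len als 0 n)))"

definition prefix_event :: "'a aut \<Rightarrow> (nat \<Rightarrow> 'a) \<Rightarrow> real \<Rightarrow> nat \<Rightarrow> (nat \<Rightarrow> 'a) set" where
  "prefix_event C y r n = {x. map x [0..<n] \<in> compressible_prefixes C y r n}"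

lemma measure_prefix_event_le:
  fixes y :: "nat \<Rightarrow> 'a::finite" and r :: real
  assumes comp: "compressor (Q,\<delta>,I)" and card2: "CARD('a) \<ge> 2" and r0: "0 < r"
    and K: "\<forall>qs als m. accepting_run 3 (Q,\<delta>,I) qs als \<and> reads als 1 y \<and> pref_len als 0 m = n \<longrightarrow>
      pref_len als 1 m \<le> K"
  shows "measure word_measure (prefix_event (Q,\<delta>,I) y r n)
    \<le> real (card Q) * real CARD('a) * (real CARD('a) powr (r - 1)) ^ n * (real K + 1)"
proof -
  let ?C = "(Q,\<delta>,I)" and ?M = "nat \<lceil>r * real n\<rceil>"
  define a where "a = real CARD('a)"
  have a2: "a \<ge> 2" using card2 unfolding a_def by simp
  have "card (compressible_prefixes ?C y r n) \<le> card Q * card {w::'a list. length w < ?M} * (K + 1)"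
    by (rule card_compressible_prefixes_le[OF comp K])
  also have "\<dots> \<le> card Q * CARD('a) ^ ?M * (K + 1)"
    using card_lists_length_less_le[OF card2] by (intro mult_right_mono mult_left_mono) auto
  finally have "real (card (compressible_prefixes ?C y r n)) \<le> real (card Q) * a ^ ?M * (real K + 1)"
    unfolding a_def by (metis of_nat_1 of_nat_add of_nat_le_iff of_nat_mult of_nat_power)
  also have "\<dots> \<le> real (card Q) * (a * (a powr r) ^ n) * (real K + 1)"
    using power_ceiling_le[of a r n] a2 r0 by (intro mult_right_mono mult_left_mono) auto
  finally have cu: "real (card (compressible_prefixes ?C y r n)) \<le> real (card Q) * (a * (a powr r) ^ n) * (real K + 1)" .
  have "measure word_measure (prefix_event ?C y r n) \<le> real (card (compressible_prefixes ?C y r n)) * (1 / a) ^ n"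
    unfolding prefix_event_def a_def
    by (rule measure_prefix_set_le) (auto simp: compressible_prefixes_def)
  also have "\<dots> \<le> real (card Q) * (a * (a powr r) ^ n) * (real K + 1) * (1 / a) ^ n"
    using cu a2 by (intro mult_right_mono) auto
  also have "\<dots> = real (card Q) * a * (a powr r / a) ^ n * (real K + 1)"
    by (simp add: power_divide)
  also have "a powr r / a = a powr (r - 1)" using a2 by (simp add: powr_diff)
  finally show ?thesis unfolding a_def .
qed

lemma compressed_below_subset_limsup:
  "{x. \<exists>qs als. accepting_run 3 C qs als \<and> reads als 0 x \<and> reads als 1 y \<and> compression_ratio als < ereal r}
    \<subseteq> limsup (prefix_event C y r)"
proof
  fix x assume "x \<in> {x. \<exists>qs als. accepting_run 3 C qs als \<and> reads als 0 x \<and> reads als 1 y \<and>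
      compression_ratio als < ereal r}"
  then obtain qs als where acc: "accepting_run 3 C qs als" and r0x: "reads als 0 x" and ry: "reads als 1 y"
    and li: "compression_ratio als < ereal r" by blast
  obtain Q \<delta> I where C: "C = (Q, \<delta>, I)" by (cases C) auto
  have "\<exists>n\<ge>N. x \<in> prefix_event C y r n" for N
  proof -
    obtain k where k: "Suc N \<le> pref_len als 0 k"
      using pref_len_unbounded[OF accepting_run_infinite[OF acc[unfolded C], of 0]] by auto
    obtain N' where N': "N' > k" "ereal (real (pref_len als 2 N') / real (pref_len als 0 N')) < ereal r"
      using liminf_upper_bound[OF li[unfolded compression_ratio_def]] by blast
    define n where "n = pref_len als 0 N'"
    have "pref_len als 0 k \<le> n" unfolding n_def using N'(1) by (intro pref_len_mono) simp
    then have n: "n \<ge> Suc N" using k by simp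
    have "real (pref_len als 2 N') / real n < r" using N'(2) unfolding n_def by simp
    then have "real (pref_len als 2 N') < r * real n" using n by (simp add: divide_less_eq)
    then have "x \<in> compressible_words C y r n" unfolding compressible_words_def using acc r0x ry n_def by blast
    then have "x \<in> prefix_event C y r n" unfolding prefix_event_def compressible_prefixes_def by blast
    then show ?thesis using n by (intro exI[of _ n]) auto
  qed
  then show "x \<in> limsup (prefix_event C y r)" unfolding limsup_INF_SUP by auto
qed

text \<open>Borel--Cantelli: with \<open>\<theta> = |A|^(r - 1) < 1\<close> and \<open>\<epsilon>\<close> chosen so that \<open>\<theta> (1 + \<epsilon>) < 1\<close>,
  the prefix events have summable measures.\<close>

lemma compressed_below_null:
  fixes y :: "nat \<Rightarrow> 'a::finite" and r :: real
  assumes nor: "normal y" and comp: "compressor (Q,\<delta>,I)" and r0: "0 < r" and r1: "r < 1"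
    and card2: "CARD('a) \<ge> 2"
  shows "{x. \<exists>qs als. accepting_run 3 (Q,\<delta>,I) qs als \<and> reads als 0 x \<and> reads als 1 y \<and>
     compression_ratio als < ereal r} \<in> null_sets (completion (word_measure :: (nat \<Rightarrow> 'a) measure))"
proof -
  let ?C = "(Q,\<delta>,I)"
  interpret P: prob_space "word_measure :: (nat \<Rightarrow> 'a) measure" by (rule prob_space_word_measure)
  have aut: "is_automaton 3 ?C" and det: "deterministic 2 ?C" using comp unfolding compressor_def by auto
  define a where "a = real CARD('a)"
  have a2: "a \<ge> 2" using card2 unfolding a_def by simp
  define \<theta> where "\<theta> = a powr (r - 1)"
  have \<theta>0: "\<theta> > 0" unfolding \<theta>_def using a2 by simp
  have \<theta>1: "\<theta> < 1"
    unfolding \<theta>_def using a2 r1 powr_less_mono[of "r - 1" 0 a] by simp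
  define \<epsilon> where "\<epsilon> = (1 / \<theta> - 1) / 2"
  have eps: "\<epsilon> > 0" unfolding \<epsilon>_def using \<theta>0 \<theta>1 by (simp add: field_simps)
  have \<theta>\<epsilon>: "\<theta> * (1 + \<epsilon>) < 1" unfolding \<epsilon>_def using \<theta>0 \<theta>1 by (simp add: field_simps)
  obtain B where B0: "B \<ge> 0" and B: "\<And>qs als m. accepting_run 3 ?C qs als \<Longrightarrow> reads als 1 y \<Longrightarrow>
      real (pref_len als 1 m) \<le> B * (1+\<epsilon>) ^ pref_len als 0 m"
    using oracle_use_exponentially_bounded[OF nor aut det eps] by blast
  define g where "g n = real (card Q) * a * (B * (\<theta> * (1 + \<epsilon>)) ^ n + \<theta> ^ n)" for n
  have meas: "measure word_measure (prefix_event ?C y r n) \<le> g n" for n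
  proof -
    define K where "K = nat \<lfloor>B * (1+\<epsilon>) ^ n\<rfloor>"
    have "\<forall>qs als m. accepting_run 3 ?C qs als \<and> reads als 1 y \<and> pref_len als 0 m = n \<longrightarrow> pref_len als 1 m \<le> K"
      using B unfolding K_def by (auto simp: le_nat_floor)
    from measure_prefix_event_le[OF comp card2 r0 this]
    have "measure word_measure (prefix_event ?C y r n) \<le> real (card Q) * a * \<theta> ^ n * (real K + 1)"
      unfolding a_def \<theta>_def .
    also have "\<dots> \<le> real (card Q) * a * \<theta> ^ n * (B * (1+\<epsilon>) ^ n + 1)"
      using B0 eps \<theta>0 a2 unfolding K_def by (intro mult_left_mono) auto
    also have "\<dots> = g n" unfolding g_def by (simp only: power_mult_distrib) (simp add: algebra_simps)
    finally show ?thesis .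
  qed
  have "summable g"
    unfolding g_def using \<theta>\<epsilon> \<theta>0 \<theta>1 eps
    by (intro summable_mult summable_add summable_geometric) auto
  then have "summable (\<lambda>n. measure word_measure (prefix_event ?C y r n))"
    by (rule summable_comparison_test[rotated]) (use meas in auto)
  then have "limsup (prefix_event ?C y r) \<in> null_sets word_measure"
    unfolding prefix_event_def
    by (intro borel_cantelli_limsup1 prefix_set_in_sets)
       (auto simp: compressible_prefixes_def P.emeasure_finite less_top[symmetric])
  then show ?thesis
    by (rule null_sets_completion_subset[OF compressed_below_subset_limsup null_sets_completionI])
qed

section \<open>The block transducer\<close>

text \<open>It copies the input and outputs every \<open>m\<close>-th symbol: the identity for \<open>m = 1\<close>, and injective
  only for \<open>m = 1\<close> or a one-letter alphabet.\<close>

definition block_trans :: "nat \<Rightarrow> (nat \<times> 'a option list \<times> nat) set" where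
  "block_trans m = {(i, [Some a, if i = 0 then Some a else None], Suc i mod m) | i a. i < m}"

definition block_transducer :: "nat \<Rightarrow> 'a aut" where
  "block_transducer m = ({..<m}, block_trans m, {0})"

lemma block_transducer_is_automaton: "m \<ge> 1 \<Longrightarrow> is_automaton 2 (block_transducer m)"
  unfolding block_transducer_def block_trans_def is_automaton_def by auto

lemma block_transducer_deterministic: "deterministic 1 (block_transducer m)"
  unfolding block_transducer_def block_trans_def deterministic_def by auto

definition block_labels :: "nat \<Rightarrow> (nat \<Rightarrow> 'a) \<Rightarrow> nat \<Rightarrow> 'a option list" where
  "block_labels m x n = [Some (x n), if n mod m = 0 then Some (x n) else None]"

lemma block_transducer_accepting_run:
  assumes m: "m \<ge> 1"
  shows "accepting_run 2 (block_transducer m) (\<lambda>n. n mod m) (block_labels m x)"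
proof -
  have tr: "(n mod m, block_labels m x n, Suc n mod m) \<in> block_trans m" for n
  proof -
    have "Suc (n mod m) mod m = Suc n mod m" by (simp add: mod_Suc_eq)
    then show ?thesis unfolding block_trans_def block_labels_def using m by force
  qed
  have inf0: "infinite {i. block_labels m x i ! 0 \<noteq> None}" unfolding block_labels_def by simp
  have inf1: "infinite {i. block_labels m x i ! 1 \<noteq> None}"
  proof (rule infinite_if_unbounded, intro allI)
    fix N
    have "m * N mod m = 0" by simp
    moreover have "N \<le> m * N" using m by simp
    ultimately show "\<exists>i\<ge>N. block_labels m x i ! 1 \<noteq> None" unfolding block_labels_def by (intro exI[of _ "m * N"]) auto
  qed
  show ?thesis unfolding accepting_run_def block_transducer_def
    using tr inf0 inf1 by (auto simp: less_2_cases_iff)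
qed

lemma block_labels_pref_input: "pref (block_labels m x) 0 n = map x [0..<n]"
  by (induction n) (simp_all add: pref_Suc option_to_list_def block_labels_def)

lemma block_labels_reads_input: "reads (block_labels m x) 0 x"
  unfolding reads_def by (simp add: block_labels_pref_input)

lemma block_labels_output_len:
  assumes "m \<ge> 1"
  shows "pref_len (block_labels m x) 1 (m * k) = k"
proof (induction k)
  case 0 then show ?case by simp
next
  case (Suc k)
  have "pref_len (block_labels m x) 1 (m * k + t) = k + (if t = 0 then 0 else 1)" if "t \<le> m" for t
    using that
  proof (induction t)
    case 0 then show ?case using Suc.IH by simp
  next
    case (Suc t)
    have "(m * k + t) mod m = t mod m" by simp
    moreover have "t mod m = 0 \<longleftrightarrow> t = 0" using Suc.prems by auto
    ultimately show ?case using Suc by (simp add: pref_len_Suc block_labels_def)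
  qed
  from this[of m] show ?case using assms by (simp add: add.commute)
qed

lemma block_labels_liminf_le:
  assumes m: "m \<ge> 1"
  shows "liminf (\<lambda>n. ereal (real (pref_len (block_labels m x) 1 n) / real (pref_len (block_labels m x) 0 n))) \<le> ereal (1 / real m)"
proof -
  let ?f = "\<lambda>n. ereal (real (pref_len (block_labels m x) 1 n) / real (pref_len (block_labels m x) 0 n))"
  have fv: "?f (m * Suc k) = ereal (1 / real m)" for k
  proof -
    have "pref_len (block_labels m x) 0 (m * Suc k) = m * Suc k" using block_labels_pref_input[of m x] by simp
    moreover have "real m + real m * real k = real m * (1 + real k)" by (simp add: algebra_simps)
    ultimately show ?thesis using block_labels_output_len[OF m, of x "Suc k"] m by simp
  qed
  show ?thesis unfolding liminf_SUP_INF
  proof (rule SUP_least)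
    fix N
    have "1 * N \<le> m * N" using m by (rule mult_le_mono1)
    moreover have "m * N \<le> m * Suc N" by simp
    ultimately have "N \<le> m * Suc N" by linarith
    then have "(INF n\<in>{N..}. ?f n) \<le> ?f (m * Suc N)" by (intro INF_lower) simp
    then show "(INF n\<in>{N..}. ?f n) \<le> ereal (1 / real m)" using fv by simp
  qed
qed

lemma block_transducer_injective:
  assumes "m = 1 \<or> CARD('a::finite) = 1"
  shows "injective_transducer (block_transducer m :: 'a aut)"
  unfolding injective_transducer_def
proof (intro allI impI)
  fix qs als qs' als' and x x' v :: "nat \<Rightarrow> 'a"
  assume acc: "accepting_run 2 (block_transducer m) qs als" and acc': "accepting_run 2 (block_transducer m) qs' als'"
    and r0: "reads als 0 x" and r0': "reads als' 0 x'" and r1: "reads als 1 v" and r1': "reads als' 1 v"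
  show "x = x'"
  proof (cases "m = 1")
    case True
    have key: "xx = vv" if acc: "accepting_run 2 (block_transducer m) qs als" and r0: "reads als 0 xx" and r1: "reads als 1 vv"
      for qs als and xx vv :: "nat \<Rightarrow> 'a"
    proof
      fix k
      have eq: "als i ! 0 = als i ! 1" for i
        using accepting_run_step[of 2 "{..<m}" "block_trans m" "{0}" qs als i] acc True unfolding block_transducer_def block_trans_def by auto
      have pe: "pref als 0 n = pref als 1 n" for n unfolding pref_def using eq by simp
      have acc2: "accepting_run 2 ({..<m}, block_trans m, {0}) qs als" using acc unfolding block_transducer_def .
      obtain n where n: "Suc k \<le> pref_len als 0 n" using pref_len_unbounded[OF accepting_run_infinite[OF acc2, of 0]] by auto
      have "xx k = pref als 0 n ! k" using reads_nth[OF r0, of k n] n by simp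
      also have "\<dots> = pref als 1 n ! k" using pe by simp
      also have "\<dots> = vv k" using reads_nth[OF r1, of k n] n pe by simp
      finally show "xx k = vv k" .
    qed
    show ?thesis using key[OF acc r0 r1] key[OF acc' r0' r1'] by simp
  next
    case False
    then have "CARD('a) = 1" using assms by simp
    then obtain z :: 'a where "UNIV = {z}" using card_1_singletonE by blast
    then have az: "\<And>a::'a. a = z" by auto
    show ?thesis
    proof
      fix i show "x i = x' i" using az[of "x i"] az[of "x' i"] by simp
    qed
  qed
qed

lemma rho_le_block:
  assumes m: "m \<ge> 1" and mc: "m = 1 \<or> CARD('a::finite) = 1"
  shows "rho (x :: nat \<Rightarrow> 'a) \<le> ereal (1 / real m)"
proof -
  have mem: "(block_transducer m, (\<lambda>n. n mod m), block_labels m x) \<in> {(T, qs, als). is_automaton 2 T \<and> deterministic 1 T \<and>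
              injective_transducer T \<and> accepting_run 2 T qs als \<and> reads als 0 x}"
    using block_transducer_is_automaton[OF m] block_transducer_deterministic block_transducer_injective[OF mc] block_transducer_accepting_run[OF m] block_labels_reads_input by auto
  have "rho x \<le> liminf (\<lambda>n. ereal (real (length (pref (block_labels m x) 1 n)) / real (length (pref (block_labels m x) 0 n))))"
    unfolding rho_def by (rule INF_lower2[OF mem]) simp
  also have "\<dots> \<le> ereal (1 / real m)" by (rule block_labels_liminf_le[OF m])
  finally show ?thesis .
qed

section \<open>Comparison of \<open>\<rho>\<close> and conditional \<open>\<rho>\<close>\<close>

lemma rho_le_one: "rho x \<le> 1"
  using rho_le_block[of 1 x] by (simp add: one_ereal_def)

lemma rho_le_zero_if_CARD_1:
  assumes "CARD('a::finite) = 1"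
  shows "rho (x :: nat \<Rightarrow> 'a) \<le> 0"
proof (rule ereal_le_epsilon2)
  fix e :: real assume e: "0 < e"
  obtain m where m: "m > 0" "inverse (real m) < e" using ex_inverse_of_nat_less[OF e] by blast
  have "rho x \<le> ereal (1 / real m)" using m(1) assms by (intro rho_le_block) auto
  also have "\<dots> \<le> 0 + ereal e" using m(2) by (simp add: inverse_eq_divide)
  finally show "rho x \<le> 0 + ereal e" .
qed

lemma rho_cond_nonneg: "0 \<le> rho_cond x y"
  unfolding rho_cond_def by (rule INF_greatest) (auto intro: Liminf_bounded)

lemma countable_compressors: "countable {C :: ('a::finite) aut. compressor C}"
proof -
  have fl: "finite {\<alpha> :: 'a option list. length \<alpha> = 3}"
    using finite_lists_length_eq[of "UNIV :: 'a option set" 3] by simp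
  have "{C :: 'a aut. compressor C} \<subseteq> Collect finite \<times> Collect finite \<times> Collect finite"
  proof
    fix C :: "'a aut" assume "C \<in> {C. compressor C}"
    then have aut: "is_automaton 3 C" unfolding compressor_def by auto
    obtain Q \<delta> I where C: "C = (Q, \<delta>, I)" by (cases C) auto
    have fQ: "finite Q" and IQ: "I \<subseteq> Q" and d: "\<forall>(p,\<alpha>,q)\<in>\<delta>. p \<in> Q \<and> q \<in> Q \<and> length \<alpha> = 3"
      using aut unfolding C is_automaton_def by auto
    have "\<delta> \<subseteq> Q \<times> {\<alpha>. length \<alpha> = 3} \<times> Q" using d by auto
    moreover have "finite (Q \<times> {\<alpha> :: 'a option list. length \<alpha> = 3} \<times> Q)" using fQ fl by simp
    ultimately have "finite \<delta>" by (rule finite_subset)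
    moreover have "finite I" using fQ IQ by (rule finite_subset[rotated])
    ultimately show "C \<in> Collect finite \<times> Collect finite \<times> Collect finite" using C fQ by simp
  qed
  moreover have "countable (Collect finite \<times> Collect finite \<times> (Collect finite :: nat set set) ::
      (nat set \<times> (nat \<times> 'a option list \<times> nat) set \<times> nat set) set)"
    by (intro countable_SIGMA countable_Collect_finite)
  ultimately show ?thesis by (rule countable_subset)
qed

text \<open>A compression ratio below 1 is below some \<open>1 - 1 / (k + 2)\<close>, so the set is a countable
  union of the null sets of \<open>compressed_below_null\<close>.\<close>

lemma rho_cond_less_one_null:
  fixes y :: "nat \<Rightarrow> 'a::finite"
  assumes nor: "normal y" and card2: "CARD('a) \<ge> 2"
  shows "{x. rho_cond x y < 1} \<in> null_sets (completion (word_measure :: (nat \<Rightarrow> 'a) measure))"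
proof -
  define r where "r k = 1 - 1 / (real k + 2)" for k :: nat
  have r0: "0 < r k" and r1: "r k < 1" for k unfolding r_def by (auto simp: field_simps)
  define N where "N = (\<lambda>(C, k). {x. \<exists>qs als. accepting_run 3 C qs als \<and> reads als 0 x \<and> reads als 1 y \<and>
        compression_ratio als < ereal (r k)})"
  define J where "J = {C :: 'a aut. compressor C} \<times> (UNIV :: nat set)"
  have "(\<Union>j\<in>J. N j) \<in> null_sets (completion word_measure)"
  proof (rule null_sets_UN')
    show "countable J" unfolding J_def using countable_compressors by (intro countable_SIGMA) auto
    fix j assume "j \<in> J"
    then obtain Q \<delta> I k where j: "j = ((Q, \<delta>, I), k)" "compressor (Q, \<delta>, I)" unfolding J_def by auto
    show "N j \<in> null_sets (completion word_measure)"
      unfolding j N_def using compressed_below_null[OF nor j(2) r0 r1 card2] by simp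
  qed
  moreover have "{x. rho_cond x y < 1} \<subseteq> (\<Union>j\<in>J. N j)"
  proof
    fix x assume "x \<in> {x. rho_cond x y < 1}"
    then obtain C qs als where comp: "compressor C" and acc: "accepting_run 3 C qs als"
      and rx: "reads als 0 x" and ry: "reads als 1 y" and li: "compression_ratio als < 1"
      unfolding rho_cond_def INF_less_iff compression_ratio_def by auto
    obtain t :: real where t: "compression_ratio als < ereal t" "ereal t < 1"
      using ereal_dense2[OF li] by blast
    obtain k where k: "k > 0" "inverse (real k) < 1 - t"
      using ex_inverse_of_nat_less[of "1 - t"] t(2) by auto
    have "1 / (real k + 2) \<le> inverse (real k)" using k(1) by (simp add: inverse_eq_divide frac_le)
    then have "t \<le> r k" unfolding r_def using k(2) by linarith
    then have "compression_ratio als < ereal (r k)"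
      using t(1) by (meson ereal_less_eq(3) order_less_le_trans)
    then have "x \<in> N (C, k)" unfolding N_def using acc rx ry by blast
    moreover have "(C, k) \<in> J" unfolding J_def using comp by simp
    ultimately show "x \<in> (\<Union>j\<in>J. N j)" by blast
  qed
  ultimately show ?thesis using null_sets_completion_subset by blast
qed

theorem theorem19:
  fixes y :: "nat \<Rightarrow> 'a::finite"
  assumes "normal y"
  shows "{x. rho_cond x y < rho x} \<in> null_sets (completion (word_measure :: (nat \<Rightarrow> 'a) measure))"
proof (cases "CARD('a) \<ge> 2")
  case False
  have "CARD('a) > 0" by (rule finite_UNIV_card_ge_0) simp
  then have "CARD('a) = 1" using False by linarith
  then have "rho x \<le> rho_cond x y" for x :: "nat \<Rightarrow> 'a"
    using rho_le_zero_if_CARD_1 rho_cond_nonneg order_trans by blast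
  then have "{x. rho_cond x y < rho x} = {}" by (auto simp: not_less[symmetric])
  then show ?thesis by simp
next
  case True
  have "{x. rho_cond x y < rho x} \<subseteq> {x. rho_cond x y < 1}"
    using rho_le_one order_less_le_trans by blast
  then show ?thesis by (rule null_sets_completion_subset[OF _ rho_cond_less_one_null[OF assms True]])
qed

end
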